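(* Let $G$ be an $N$-player normal-form game in which each player has $T$ actions, and let $f$ be a deterministic, permutation-equivariant embedding function with $f(G)=(\mathbf{A}_1,\dots,\mathbf{A}_N)$, $\mathbf{A}_p=({\bm{a}}^1_p,\dots,{\bm{a}}^T_p)$. If for some player $p$ and actions $a^i_p,a^j_p$ we have $G_r(a^i_p,a_{\neg p}) = G_r(a^j_p,a_{\neg p})$ for every player $r$ and every $a_{\neg p}\in\mathcal{A}_{\neg p}$, then ${\bm{a}}^i_p={\bm{a}}^j_p$.
   Context: A normal-form game $G$ with $N$ players, each player $p$ having actions $\mathcal{A}_p=\{a^1_p,\dots,a^T_p\}$, is given by payoff functions $G_p:\mathcal{A}=\mathcal{A}_1\times\dots\times\mathcal{A}_N\to\mathbb{R}$; $a_{\neg p}\in\mathcal{A}_{\neg p}$ denotes the actions of all players other than $p$. A strong isomorphism $\phi=((\tau_p)_{p\in[N]},\omega)$ consists of a permutation $\omega$ of the players and, for each player $p$, a bijection $\tau_p$ from the actions of $p$ to the actions of $\omega(p)$; it maps $G$ to the game $\phi(G)$ with $\phi(G)_{\omega(p)}(b)=G_p(a)$ for all $p$ and joint actions $a$, where $b_{\omega(r)}=\tau_r(a_r)$ for every player $r$. An embedding function $f$ assigns to each game a tuple $(\mathbf{A}_1,\dots,\mathbf{A}_N)$ of action embeddings ${\bm{a}}^t_p\in\mathbb{R}^D$, one per action; $\phi$ acts on such a tuple by placing the embedding of action $a^i_p$ at the position of action $\tau_p(a^i_p)$ of player $\omega(p)$. $f$ is (permutation-)equivariant if $f(\phi(G))=\phi(f(G))$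 for every game $G$ and strong isomorphism $\phi$; deterministic means $f$ is a single-valued function of the game. *)

theory Defs
  imports "HOL-Analysis.Analysis"
begin

text \<open>Players are the elements of a finite type 'p (N = CARD('p)); every player has the
same set of T actions, the elements of a finite type 'a (T = CARD('a)).\<close>

type_synonym ('p, 'a) game = "'p \<Rightarrow> ('p \<Rightarrow> 'a) \<Rightarrow> real"
type_synonym ('p, 'a, 'd) embeddings = "'p \<Rightarrow> 'a \<Rightarrow> real ^ 'd"

definition strong_iso :: "('p \<Rightarrow> 'p) \<Rightarrow> ('p \<Rightarrow> 'a \<Rightarrow> 'a) \<Rightarrow> bool" where
  "strong_iso \<omega> \<tau> \<longleftrightarrow> bij \<omega> \<and> (\<forall>p. bij (\<tau> p))"

text \<open>phi(G)_{\<omega> p}(b) = G_p(a) where b_{\<omega> r} = \<tau>_r(a_r); i.e.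
phi(G)_q(b) = G_{\<omega>^-1 q}(\<lambda>r. \<tau>_r^-1(b_{\<omega> r})).\<close>
definition iso_game :: "('p \<Rightarrow> 'p) \<Rightarrow> ('p \<Rightarrow> 'a \<Rightarrow> 'a) \<Rightarrow> ('p, 'a) game \<Rightarrow> ('p, 'a) game" where
  "iso_game \<omega> \<tau> G = (\<lambda>q b. G (inv \<omega> q) (\<lambda>r. inv (\<tau> r) (b (\<omega> r))))"

text \<open>The embedding of action x of player p is placed at position \<tau> p x of player \<omega> p.\<close>
definition iso_emb :: "('p \<Rightarrow> 'p) \<Rightarrow> ('p \<Rightarrow> 'a \<Rightarrow> 'a) \<Rightarrow> ('p, 'a, 'd) embeddings \<Rightarrow> ('p, 'a, 'd) embeddings" where
  "iso_emb \<omega> \<tau> E = (\<lambda>q y. E (inv \<omega> q) (inv (\<tau> (inv \<omega> q)) y))"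

definition equivariant :: "(('p::finite, 'a::finite) game \<Rightarrow> ('p, 'a, 'd::finite) embeddings) \<Rightarrow> bool" where
  "equivariant f \<longleftrightarrow> (\<forall>G \<omega> \<tau>. strong_iso \<omega> \<tau> \<longrightarrow> f (iso_game \<omega> \<tau> G) = iso_emb \<omega> \<tau> (f G))"

end

theory Submission
  imports Defs "HOL-Combinatorics.Transposition"
begin

text \<open>Swapping actions i and j of player p, and fixing everything else, is a strong
isomorphism that leaves G unchanged when i and j are payoff-equivalent for p. By
equivariance it also leaves f G unchanged; but it moves the embedding of j to the
position of i.\<close>

lemma equivariant_fixed_by_automorphism:
  assumes "equivariant f" and "strong_iso \<omega> \<tau>" and "iso_game \<omega> \<tau> G = G"
  shows "iso_emb \<omega> \<tau> (f G) = f G"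
  using assms unfolding equivariant_def by metis

abbreviation action_swap :: "'p \<Rightarrow> 'a \<Rightarrow> 'a \<Rightarrow> 'p \<Rightarrow> 'a \<Rightarrow> 'a" where
  "action_swap p i j \<equiv> (\<lambda>_. id)(p := Transposition.transpose i j)"

lemma strong_iso_action_swap: "strong_iso id (action_swap p i j)"
  by (simp add: strong_iso_def)

lemma inv_action_swap: "inv (action_swap p i j r) = action_swap p i j r"
  by (simp add: inv_id)

lemma iso_game_action_swap:
  assumes "\<forall>r. \<forall>a. G r (a(p := i)) = G r (a(p := j))"
  shows "iso_game id (action_swap p i j) G = G"
proof (intro ext)
  fix q b
  have swapped: "(\<lambda>r. inv (action_swap p i j r) (b r)) = b(p := Transposition.transpose i j (b p))"
    by (auto simp: inv_action_swap)
  have "G q (b(p := Transposition.transpose i j (b p))) = G q b"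
    using assms by (cases "b p = i \<or> b p = j") (auto, metis fun_upd_triv)+
  then show "iso_game id (action_swap p i j) G q b = G q b"
    unfolding iso_game_def inv_id id_apply swapped .
qed

lemma iso_emb_action_swap: "iso_emb id (action_swap p i j) E p i = E p j"
  by (simp add: iso_emb_def inv_id)

theorem proposition1:
  fixes f :: "('p::finite, 'a::finite) game \<Rightarrow> ('p, 'a, 'd::finite) embeddings"
    and G :: "('p, 'a) game" and p :: 'p and i j :: 'a
  assumes "equivariant f"
    and "\<forall>r. \<forall>a :: 'p \<Rightarrow> 'a. G r (a(p := i)) = G r (a(p := j))"
  shows "f G p i = f G p j"
proof -
  have "iso_emb id (action_swap p i j) (f G) = f G"
    using equivariant_fixed_by_automorphism[OF assms(1) strong_iso_action_swap]
      iso_game_action_swap[OF assms(2)] .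
  then show ?thesis
    using iso_emb_action_swap[of p i j "f G"] by simp
qed

end
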